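(* Let $N\ge1$, $\beta$ a non-negative integer and $\gamma$ a constant. For every $Q$ in the algebra $\mathcal{H}_0'$ and every $f\in\mathbb{C}[x_1,\dots,x_N]$, $$\sigma^B(Qf)=\rho^B(Q)\,\sigma^B(f).$$
   Context: On $\mathbb{C}[x]=\mathbb{C}[x_1,\dots,x_N]$: $s_{ij}$ swaps $x_i,x_j$; $D^A_j=\frac{\partial}{\partial x_j}+\beta\sum_{k\neq j}\frac{1-s_{jk}}{x_j-x_k}$; $\hat D^A_j=x_jD^A_j+\beta\sum_{k<j}s_{jk}$; $\mathcal{H}_0'$ is the operator algebra generated by the $\hat D^A_j$ and $s_{ij}$, and $\widetilde{\mathcal H}'$ the one generated by the $x_j$, $\hat D^A_j$, $s_{ij}$. On functions of $z=(z_1,\dots,z_N)$: $s_{ij}$ swaps $z_i,z_j$; $t_j$ sends $z_j\mapsto -z_j$; $D^B_j=\frac{\partial}{\partial z_j}+\beta\sum_{k\neq j}\left(\frac{1-s_{jk}}{z_j-z_k}+\frac{1-t_jt_ks_{jk}}{z_j+z_k}\right)+\gamma\frac{1-t_j}{z_j}$; $\tilde b^\dagger_j=\frac1{\sqrt2}(-D^B_j+2z_j)$, $\tilde b_j=\frac1{\sqrt2}D^B_j$; $\tilde h^B_j=\tilde b^\dagger_j\tilde b_j+\beta\sum_{k<j}(s_{jk}+t_jt_ks_{jk})$. The operators $(\tilde b^\dagger_j)^2$ and $\tilde h^B_j$ preserve $\mathbb{C}[z^2]=\mathbb{C}[z_1^2,\dots,z_N^2]$. $\rho^B$ is the representation of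 $\widetilde{\mathcal H}'$ on $\mathbb{C}[z^2]$ determined by $\rho^B(x_j)=\tfrac12(\tilde b^\dagger_j)^2$, $\rho^B(\hat D^A_j)=\tfrac12\tilde h^B_j$, $\rho^B(s_{ij})=s_{ij}$. The linear map $\sigma^B:\mathbb{C}[x]\to\mathbb{C}[z^2]$ is $\sigma^B(f)=f\big((\tilde b^\dagger_1)^2/2,\dots,(\tilde b^\dagger_N)^2/2\big)\cdot1$. *)

theory Defs
  imports Complex_Main "HOL-Library.Poly_Mapping"
begin

text \<open>Multivariate polynomials over the complex numbers, in the variables
  indexed by natural numbers (variable number i stands for x_(i+1), resp. z_(i+1)).\<close>

type_synonym mpoly = "(nat \<Rightarrow>\<^sub>0 nat) \<Rightarrow>\<^sub>0 complex"
type_synonym op = "mpoly \<Rightarrow> mpoly"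

definition cst :: "complex \<Rightarrow> mpoly" where
  "cst c = Poly_Mapping.single 0 c"

definition var :: "nat \<Rightarrow> mpoly" where
  "var i = Poly_Mapping.single (Poly_Mapping.single i 1) 1"

definition in_vars :: "nat \<Rightarrow> mpoly \<Rightarrow> bool" where
  "in_vars N p \<longleftrightarrow> (\<forall>m\<in>Poly_Mapping.keys p. \<forall>i\<in>Poly_Mapping.keys m. i < N)"

definition swapv :: "nat \<Rightarrow> nat \<Rightarrow> op" where
  "swapv i j p = Abs_poly_mapping
     (\<lambda>m. Poly_Mapping.lookup p (Abs_poly_mapping (\<lambda>k. Poly_Mapping.lookup m (if k = i then j else if k = j then i else k))))"

definition flipv :: "nat \<Rightarrow> op" where
  "flipv j p = Abs_poly_mapping (\<lambda>m. (-1) ^ Poly_Mapping.lookup m j * Poly_Mapping.lookup p m)"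

definition pderivv :: "nat \<Rightarrow> op" where
  "pderivv j p = Abs_poly_mapping
     (\<lambda>m. of_nat (Poly_Mapping.lookup m j + 1) * Poly_Mapping.lookup p (m + Poly_Mapping.single j 1))"

definition pdivide :: "mpoly \<Rightarrow> mpoly \<Rightarrow> mpoly" where
  "pdivide p l = (THE q. l * q = p)"

definition DA :: "nat \<Rightarrow> nat \<Rightarrow> nat \<Rightarrow> op" where
  "DA \<beta> N j p = pderivv j p
     + cst (of_nat \<beta>) * (\<Sum>k\<in>{k. k < N \<and> k \<noteq> j}. pdivide (p - swapv j k p) (var j - var k))"

definition DhatA :: "nat \<Rightarrow> nat \<Rightarrow> nat \<Rightarrow> op" where
  "DhatA \<beta> N j p = var j * DA \<beta> N j p + cst (of_nat \<beta>) * (\<Sum>k<j. swapv j k p)"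

definition DB :: "nat \<Rightarrow> complex \<Rightarrow> nat \<Rightarrow> nat \<Rightarrow> op" where
  "DB \<beta> \<gamma> N j p = pderivv j p
     + cst (of_nat \<beta>) * (\<Sum>k\<in>{k. k < N \<and> k \<noteq> j}.
          pdivide (p - swapv j k p) (var j - var k)
        + pdivide (p - flipv j (flipv k (swapv j k p))) (var j + var k))
     + cst \<gamma> * pdivide (p - flipv j p) (var j)"

definition bdag :: "nat \<Rightarrow> complex \<Rightarrow> nat \<Rightarrow> nat \<Rightarrow> op" where
  "bdag \<beta> \<gamma> N j p = cst (1 / complex_of_real (sqrt 2)) * (- DB \<beta> \<gamma> N j p + cst 2 * var j * p)"

definition bann :: "nat \<Rightarrow> complex \<Rightarrow> nat \<Rightarrow> nat \<Rightarrow> op" where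
  "bann \<beta> \<gamma> N j p = cst (1 / complex_of_real (sqrt 2)) * DB \<beta> \<gamma> N j p"

definition htB :: "nat \<Rightarrow> complex \<Rightarrow> nat \<Rightarrow> nat \<Rightarrow> op" where
  "htB \<beta> \<gamma> N j p = bdag \<beta> \<gamma> N j (bann \<beta> \<gamma> N j p)
     + cst (of_nat \<beta>) * (\<Sum>k<j. swapv j k p + flipv j (flipv k (swapv j k p)))"

text \<open>The operator (\<tilde>b^\<dagger>_j)^2 / 2, i.e. \<rho>^B(x_j).\<close>
definition Bsq :: "nat \<Rightarrow> complex \<Rightarrow> nat \<Rightarrow> nat \<Rightarrow> op" where
  "Bsq \<beta> \<gamma> N j p = cst (1/2) * bdag \<beta> \<gamma> N j (bdag \<beta> \<gamma> N j p)"

text \<open>\<sigma>^B(f) = f((\<tilde>b^\<dagger>_1)^2/2, ..., (\<tilde>b^\<dagger>_N)^2/2) \<cdot> 1, the monomial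
  x^m being sent to (B_1^{m_1} \<circ> ... \<circ> B_N^{m_N}) 1 (the B_j commute).\<close>
definition mono_op :: "nat \<Rightarrow> complex \<Rightarrow> nat \<Rightarrow> (nat \<Rightarrow>\<^sub>0 nat) \<Rightarrow> op" where
  "mono_op \<beta> \<gamma> N m = foldr (\<lambda>j acc. (Bsq \<beta> \<gamma> N j ^^ Poly_Mapping.lookup m j) \<circ> acc) [0..<N] id"

definition sigmaB :: "nat \<Rightarrow> complex \<Rightarrow> nat \<Rightarrow> mpoly \<Rightarrow> mpoly" where
  "sigmaB \<beta> \<gamma> N f = (\<Sum>m\<in>Poly_Mapping.keys f. cst (Poly_Mapping.lookup f m) * mono_op \<beta> \<gamma> N m 1)"

text \<open>Graph of \<rho>^B restricted to the algebra H_0': the pairs (Q, \<rho>^B(Q)) obtained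
  from the generators (\<hat>D^A_j, \<tilde>h^B_j/2) and (s_ij, s_ij) by the algebra operations.
  The first components are exactly the elements of H_0'.\<close>
inductive_set rhoB_H0 :: "nat \<Rightarrow> complex \<Rightarrow> nat \<Rightarrow> (op \<times> op) set"
  for \<beta> :: nat and \<gamma> :: complex and N :: nat where
  gen_D: "j < N \<Longrightarrow> (DhatA \<beta> N j, \<lambda>p. cst (1/2) * htB \<beta> \<gamma> N j p) \<in> rhoB_H0 \<beta> \<gamma> N"
| gen_s: "i < N \<Longrightarrow> j < N \<Longrightarrow> (swapv i j, swapv i j) \<in> rhoB_H0 \<beta> \<gamma> N"
| unit: "(id, id) \<in> rhoB_H0 \<beta> \<gamma> N"
| add: "(Q1, R1) \<in> rhoB_H0 \<beta> \<gamma> N \<Longrightarrow> (Q2, R2) \<in> rhoB_H0 \<beta> \<gamma> N \<Longrightarrow>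
          (\<lambda>p. Q1 p + Q2 p, \<lambda>p. R1 p + R2 p) \<in> rhoB_H0 \<beta> \<gamma> N"
| scal: "(Q, R) \<in> rhoB_H0 \<beta> \<gamma> N \<Longrightarrow>
          (\<lambda>p. cst c * Q p, \<lambda>p. cst c * R p) \<in> rhoB_H0 \<beta> \<gamma> N"
| comp: "(Q1, R1) \<in> rhoB_H0 \<beta> \<gamma> N \<Longrightarrow> (Q2, R2) \<in> rhoB_H0 \<beta> \<gamma> N \<Longrightarrow>
          (Q1 \<circ> Q2, R1 \<circ> R2) \<in> rhoB_H0 \<beta> \<gamma> N"

end

theory Submission
  imports Defs "HOL-Combinatorics.Transposition"
begin

(* Put A_j = 2 z_j - D^B_j, so that rho^B(x_j) = (b_j^dagger)^2 / 2 = A_j^2 / 4 =: B_j.  The type B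
   Dunkl operators commute, hence so do the A_j and the B_j; therefore sigma^B(x_k f) = B_k sigma^B(f)
   and sigma^B commutes with the swaps s_ij.  Every sigma^B(f) is a polynomial in z_1^2, ..., z_N^2,
   and on such polynomials the commutators [D^B_j, z_l] simplify so far that h_j = rho^B(D^A_j hat)
   satisfies
     h_j B_l = B_l h_j + B_j [D^A_j, x_l] + beta * sum_{k<j} (B_{s_jk(l)} - B_l) s_jk,
   the image of the Leibniz rule of D^A_j hat with respect to x_l.  Induction on f gives
   sigma^B(D^A_j hat f) = h_j sigma^B(f), and induction over the algebra generated by the
   D^A_j hat and the s_ij finishes the proof. *)

section \<open>Polynomial arithmetic\<close>

lemma lookup_cst_mult: "Poly_Mapping.lookup (cst c * p) m = c * Poly_Mapping.lookup p m"
  unfolding cst_def mult_map_scale_conv_mult[symmetric]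
  by (simp add: Poly_Mapping.map.rep_eq when_def)

lemma lookup_mult_cst: "Poly_Mapping.lookup (p * cst c) m = c * Poly_Mapping.lookup p m"
  by (simp add: mult.commute[of p] lookup_cst_mult)

lemma cst_mult_cst: "cst a * cst b = cst (a * b)"
  by (simp add: cst_def mult_single)

lemma cst_mult_cst_mult: "cst a * (cst b * p) = cst (a * b) * p"
  by (simp add: mult.assoc[symmetric] cst_mult_cst)

lemma cst_1 [simp]: "cst 1 = 1"
  by (simp add: cst_def)

lemma cst_0 [simp]: "cst 0 = 0"
  by (simp add: cst_def)

lemma cst_add: "cst (a + b) = cst a + cst b"
  by (simp add: cst_def single_add)

lemma cst_diff: "cst (a - b) = cst a - cst b"
  by (simp add: cst_def single_diff)

lemma cst_uminus: "cst (- a) = - cst a"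
  by (simp add: cst_def single_uminus)

lemma cst_numeral: "cst (numeral n) = numeral n"
  by (simp add: cst_def)

lemma lookup_numeral_mult:
  "Poly_Mapping.lookup (numeral n * (p::mpoly)) m = numeral n * Poly_Mapping.lookup p m"
  using lookup_cst_mult[of "numeral n" p m] by (simp add: cst_numeral)

lemmas lookup_linear_simps = lookup_add lookup_minus lookup_uminus lookup_sum
  lookup_cst_mult lookup_mult_cst lookup_numeral_mult

lemma lookup_var: "Poly_Mapping.lookup (var l) m = (if m = Poly_Mapping.single l 1 then 1 else 0)"
  by (auto simp: var_def lookup_single when_def)

lemma var_power: "var l ^ n = Poly_Mapping.single (Poly_Mapping.single l n) 1"
  by (induction n) (simp_all add: var_def mult_single single_add[symmetric] add.commute)

lemma single_1_eq_iff [simp]: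
  "Poly_Mapping.single l (1::nat) = Poly_Mapping.single j 1 \<longleftrightarrow> l = j"
  by (metis lookup_single_eq lookup_single_not_eq one_neq_zero)

lemma single_Suc_0_eq_iff [simp]:
  "Poly_Mapping.single l (Suc 0) = Poly_Mapping.single j (Suc 0) \<longleftrightarrow> l = j"
  using single_1_eq_iff by simp

lemma var_neq_0: "var l \<noteq> 0"
  by (metis lookup_single_eq lookup_zero one_neq_zero var_def)

lemma var_diff_var_neq_0: "j \<noteq> k \<Longrightarrow> var j - var k \<noteq> 0"
  by (metis eq_iff_diff_eq_0 lookup_var single_1_eq_iff zero_neq_one)

lemma var_add_var_neq_0:
  assumes "j \<noteq> k"
  shows "var j + var k \<noteq> 0"
proof
  assume "var j + var k = 0"
  then have "Poly_Mapping.lookup (var j + var k) (Poly_Mapping.single j 1) = 0"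
    by simp
  then show False
    using assms by (simp add: lookup_add lookup_var)
qed

lemma lookup_single_mult:
  "Poly_Mapping.lookup (Poly_Mapping.single (k::nat \<Rightarrow>\<^sub>0 nat) a * (p::mpoly)) m =
     (if \<forall>i. Poly_Mapping.lookup k i \<le> Poly_Mapping.lookup m i
      then a * Poly_Mapping.lookup p (m - k) else 0)"
proof -
  have "Poly_Mapping.lookup (Poly_Mapping.single k a * p) m
      = a * (\<Sum>q. Poly_Mapping.lookup p q when m = k + q)"
    by (simp add: lookup_mult lookup_single when_mult)
  moreover have "(m = k + q) = (q = m - k)" if "\<forall>i. Poly_Mapping.lookup k i \<le> Poly_Mapping.lookup m i" for q
    using that by (auto simp: poly_mapping_eq_iff fun_eq_iff lookup_add lookup_minus)
  moreover have "m \<noteq> k + q" if "\<not> (\<forall>i. Poly_Mapping.lookup k i \<le> Poly_Mapping.lookup m i)" for q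
    using that by (auto simp: lookup_add)
  ultimately show ?thesis
    by auto
qed

lemma lookup_var_mult:
  "Poly_Mapping.lookup (var l * p) m =
     (if 0 < Poly_Mapping.lookup m l then Poly_Mapping.lookup p (m - Poly_Mapping.single l 1) else 0)"
proof -
  have "(\<forall>i. Poly_Mapping.lookup (Poly_Mapping.single l 1) i \<le> Poly_Mapping.lookup m i)
      \<longleftrightarrow> 0 < Poly_Mapping.lookup m l"
    by (auto simp: lookup_single when_def)
  then show ?thesis
    unfolding var_def lookup_single_mult by simp
qed

definition vars_in :: "nat set \<Rightarrow> mpoly \<Rightarrow> bool" where
  "vars_in V p \<longleftrightarrow> (\<forall>m\<in>Poly_Mapping.keys p. Poly_Mapping.keys m \<subseteq> V)"

lemma in_vars_iff_vars_in: "in_vars N p \<longleftrightarrow> vars_in {..<N} p"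
  by (auto simp: in_vars_def vars_in_def)

lemma vars_in_UNIV [simp]: "vars_in UNIV p"
  by (simp add: vars_in_def)

lemma vars_in_cst: "vars_in V (cst c)"
  by (auto simp: vars_in_def cst_def)

lemma vars_in_0: "vars_in V 0"
  using vars_in_cst[of V 0] by simp

lemma vars_in_add: "vars_in V p \<Longrightarrow> vars_in V q \<Longrightarrow> vars_in V (p + q)"
  unfolding vars_in_def using keys_add[of p q] by blast

lemma vars_in_cst_mult: "vars_in V p \<Longrightarrow> vars_in V (cst c * p)"
  by (auto simp: vars_in_def in_keys_iff lookup_cst_mult)

lemma vars_in_uminus: "vars_in V p \<Longrightarrow> vars_in V (- p)"
  using vars_in_cst_mult[of V p "-1"] by (simp add: cst_uminus)

lemma vars_in_diff: "vars_in V p \<Longrightarrow> vars_in V q \<Longrightarrow> vars_in V (p - q)"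
  using vars_in_add[of V p "- q"] vars_in_uminus[of V q] by simp

lemma vars_in_sum: "(\<And>k. k \<in> S \<Longrightarrow> vars_in V (f k)) \<Longrightarrow> vars_in V (sum f S)"
  by (induction S rule: infinite_finite_induct) (auto simp: vars_in_0 vars_in_add)

lemma vars_in_var_mult:
  assumes "l \<in> V" "vars_in V p"
  shows "vars_in V (var l * p)"
  unfolding vars_in_def
proof (intro ballI subsetI)
  fix m x
  assume "m \<in> Poly_Mapping.keys (var l * p)" and x: "x \<in> Poly_Mapping.keys m"
  then have "0 < Poly_Mapping.lookup m l" "m - Poly_Mapping.single l 1 \<in> Poly_Mapping.keys p"
    by (auto simp: in_keys_iff lookup_var_mult split: if_splits)
  with assms(2) have "Poly_Mapping.keys (m - Poly_Mapping.single l 1) \<subseteq> V"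
    by (auto simp: vars_in_def)
  moreover have "x = l \<or> x \<in> Poly_Mapping.keys (m - Poly_Mapping.single l 1)"
    using x by (auto simp: in_keys_iff lookup_minus lookup_single)
  ultimately show "x \<in> V"
    using assms(1) by blast
qed

lemma poly_expand: "p = (\<Sum>m\<in>Poly_Mapping.keys p. Poly_Mapping.single m (Poly_Mapping.lookup p m))"
  by (rule poly_mapping_eqI) (simp add: lookup_sum lookup_single when_def in_keys_iff)

lemma monomial_induct:
  assumes "Poly_Mapping.keys m \<subseteq> V"
    and cst: "\<And>c. P (cst c)"
    and var: "\<And>l p. l \<in> V \<Longrightarrow> vars_in V p \<Longrightarrow> P p \<Longrightarrow> P (var l * p)"
  shows "P (Poly_Mapping.single m c)"
  using assms(1)
proof (induction m arbitrary: c rule: update_induct)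
  case const
  then show ?case
    using cst by (simp add: cst_def)
next
  case (update f a b)
  have a: "a \<in> V" and f: "Poly_Mapping.keys f \<subseteq> V"
    using update.prems update.hyps by (auto simp: keys_update)
  have "P (var a ^ n * Poly_Mapping.single f c)" for n
  proof (induction n)
    case 0
    then show ?case
      using update.IH f by simp
  next
    case (Suc n)
    have "vars_in V (var a ^ n * Poly_Mapping.single f c)"
      using a f keys_add[of "Poly_Mapping.single a n" f]
      by (auto simp: var_power mult_single vars_in_def split: if_splits)
    then show ?case
      using var[OF a _ Suc] by (simp add: mult.assoc)
  qed
  moreover have "Poly_Mapping.update a b f = f + Poly_Mapping.single a b"
    using update.hyps
    by (intro poly_mapping_eqI) (auto simp: lookup_update lookup_add lookup_single in_keys_iff when_def)
  ultimately show ?case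
    by (simp add: var_power mult_single add.commute)
qed

lemma mpoly_induct [consumes 1, case_names const plus var]:
  assumes "vars_in V p"
    and cst: "\<And>c. P (cst c)"
    and add: "\<And>p q. P p \<Longrightarrow> P q \<Longrightarrow> P (p + q)"
    and var: "\<And>l p. l \<in> V \<Longrightarrow> vars_in V p \<Longrightarrow> P p \<Longrightarrow> P (var l * p)"
  shows "P p"
proof -
  have "P (\<Sum>m\<in>S. Poly_Mapping.single m (Poly_Mapping.lookup p m))"
    if "S \<subseteq> Poly_Mapping.keys p" for S
    using finite_subset[OF that finite_keys] that
  proof (induction S rule: finite_induct)
    case empty
    then show ?case
      using cst[of 0] by simp
  next
    case (insert x F)
    have "P (Poly_Mapping.single x (Poly_Mapping.lookup p x))"
      using assms(1) insert.prems by (intro monomial_induct[OF _ cst var]) (auto simp: vars_in_def)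
    then show ?case
      using insert add by simp
  qed
  then show ?thesis
    by (subst poly_expand) simp
qed

section \<open>Algebra endomorphisms and divided differences\<close>

locale alg_endo =
  fixes w :: op
  assumes add: "w (p + q) = w p + w q"
    and cst_mult: "w (cst c * p) = cst c * w p"
    and var_mult: "w (var l * p) = w (var l) * w p"
    and one: "w 1 = 1"
begin

lemma cst: "w (cst c) = cst c"
  using cst_mult[of c 1] by (simp add: one)

lemma zero: "w 0 = 0"
  using cst[of 0] by simp

lemma uminus: "w (- p) = - w p"
  using cst_mult[of "-1" p] by (simp add: cst_uminus)

lemma diff: "w (p - q) = w p - w q"
  using add[of p "- q"] by (simp add: uminus)

lemma sum: "w (sum f S) = (\<Sum>k\<in>S. w (f k))"
  by (induction S rule: infinite_finite_induct) (simp_all add: zero add)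

lemma mult: "w (p * q) = w p * w q"
proof -
  have "vars_in UNIV p" by simp
  then show ?thesis
    by (induction p rule: mpoly_induct) (simp_all add: cst_mult cst distrib_right add mult.assoc var_mult)
qed

end

lemma alg_endo_comp:
  assumes "alg_endo w1" "alg_endo w2"
  shows "alg_endo (\<lambda>p. w1 (w2 p))"
proof
  fix p q c l
  show "w1 (w2 (p + q)) = w1 (w2 p) + w1 (w2 q)"
    using assms by (simp add: alg_endo.add)
  show "w1 (w2 (cst c * p)) = cst c * w1 (w2 p)"
    using assms by (simp add: alg_endo.cst_mult)
  show "w1 (w2 (var l * p)) = w1 (w2 (var l)) * w1 (w2 p)"
    using assms by (simp add: alg_endo.var_mult alg_endo.mult[OF assms(1)])
  show "w1 (w2 1) = 1"
    using assms by (simp add: alg_endo.one)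
qed

lemma alg_endo_eqI:
  assumes "alg_endo w1" "alg_endo w2" "\<And>l. w1 (var l) = w2 (var l)"
  shows "w1 p = w2 p"
proof -
  have "vars_in UNIV p" by simp
  then show ?thesis
    by (induction p rule: mpoly_induct)
      (simp_all add: assms alg_endo.cst alg_endo.add alg_endo.var_mult)
qed

lemma alg_endo_comp_eqI:
  assumes "alg_endo u" "alg_endo v" "alg_endo u'" "alg_endo v'"
    and "\<And>l. u (v (var l)) = u' (v' (var l))"
  shows "u (v p) = u' (v' p)"
  using alg_endo_eqI[OF alg_endo_comp[OF assms(1,2)] alg_endo_comp[OF assms(3,4)]] assms(5) by blast

lemma map_key_transpose_involutory [simp]:
  "Poly_Mapping.map_key (transpose i j) (Poly_Mapping.map_key (transpose i j) m) = m"
  by (rule poly_mapping_eqI) (simp add: Poly_Mapping.map_key.rep_eq)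

lemma lookup_swapv:
  "Poly_Mapping.lookup (swapv i j p) m =
     Poly_Mapping.lookup p (Poly_Mapping.map_key (transpose i j) m)"
proof -
  have "inj (Poly_Mapping.map_key (transpose i j))"
    by (metis injI map_key_transpose_involutory)
  then have "finite {m. Poly_Mapping.lookup p (Poly_Mapping.map_key (transpose i j) m) \<noteq> 0}"
    using finite_vimageI[OF finite_lookup] by (simp only: vimage_def mem_Collect_eq)
  moreover have map_key_eq:
    "Abs_poly_mapping (\<lambda>k. Poly_Mapping.lookup m (if k = i then j else if k = j then i else k))
      = Poly_Mapping.map_key (transpose i j) m" for m
  proof -
    have "(\<lambda>k. Poly_Mapping.lookup m (if k = i then j else if k = j then i else k))
        = Poly_Mapping.lookup (Poly_Mapping.map_key (transpose i j) m)"
      by (simp add: Poly_Mapping.map_key.rep_eq fun_eq_iff transpose_def)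
    then show ?thesis
      by (simp add: lookup_inverse)
  qed
  have "swapv i j p = Abs_poly_mapping (\<lambda>m. Poly_Mapping.lookup p (Poly_Mapping.map_key (transpose i j) m))"
    unfolding swapv_def map_key_eq ..
  ultimately show ?thesis
    by simp
qed

lemma swapv_var: "swapv i j (var l) = var (transpose i j l)"
proof (rule poly_mapping_eqI)
  fix m :: "nat \<Rightarrow>\<^sub>0 nat"
  have "Poly_Mapping.map_key (transpose i j) (Poly_Mapping.single (transpose i j l) 1) = Poly_Mapping.single l 1"
    using map_key_single[OF inj_transpose, of i j "transpose i j l" 1] by simp
  then have "Poly_Mapping.map_key (transpose i j) m = Poly_Mapping.single l 1
      \<longleftrightarrow> m = Poly_Mapping.single (transpose i j l) 1"
    by (metis map_key_transpose_involutory)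
  then show "Poly_Mapping.lookup (swapv i j (var l)) m = Poly_Mapping.lookup (var (transpose i j l)) m"
    by (simp add: lookup_swapv lookup_var)
qed

lemma alg_endo_swapv: "alg_endo (swapv i j)"
proof
  fix p q c l
  show "swapv i j (p + q) = swapv i j p + swapv i j q"
    by (rule poly_mapping_eqI) (simp add: lookup_swapv lookup_add)
  show "swapv i j (cst c * p) = cst c * swapv i j p"
    by (rule poly_mapping_eqI) (simp add: lookup_swapv lookup_cst_mult)
  have map_key_diff: "Poly_Mapping.map_key (transpose i j) (m - Poly_Mapping.single (transpose i j l) 1)
      = Poly_Mapping.map_key (transpose i j) m - Poly_Mapping.single l 1" for m
    by (rule poly_mapping_eqI)
      (auto simp: Poly_Mapping.map_key.rep_eq lookup_minus lookup_single when_def transpose_eq_iff)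
  show "swapv i j (var l * p) = swapv i j (var l) * swapv i j p"
    by (intro poly_mapping_eqI)
      (simp add: swapv_var lookup_swapv lookup_var_mult Poly_Mapping.map_key.rep_eq map_key_diff
        del: One_nat_def)
  have map_key_eq_0: "Poly_Mapping.map_key (transpose i j) m = 0 \<longleftrightarrow> m = 0" for m
    by (metis map_key_transpose_involutory map_key_zero[OF inj_transpose])
  show "swapv i j 1 = 1"
    by (intro poly_mapping_eqI) (simp add: lookup_swapv lookup_one when_def map_key_eq_0)
qed

interpretation swapv: alg_endo "swapv i j" for i j
  by (rule alg_endo_swapv)

lemma lookup_flipv:
  "Poly_Mapping.lookup (flipv j p) m = (-1) ^ Poly_Mapping.lookup m j * Poly_Mapping.lookup p m"
proof -
  have "finite {m. (-1) ^ Poly_Mapping.lookup m j * Poly_Mapping.lookup p m \<noteq> (0::complex)}"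
    by (rule finite_subset[of _ "{m. Poly_Mapping.lookup p m \<noteq> 0}"]) auto
  then show ?thesis
    by (simp add: flipv_def)
qed

lemma flipv_var: "flipv j (var l) = (if l = j then - var l else var l)"
  by (rule poly_mapping_eqI) (auto simp: lookup_flipv var_def lookup_single when_def)

lemma flipv_var_eq_cst_mult: "flipv a (var l) = cst (if l = a then -1 else 1) * var l"
  by (simp add: flipv_var cst_uminus)

lemma alg_endo_flipv: "alg_endo (flipv j)"
proof
  fix p q c l
  show "flipv j (p + q) = flipv j p + flipv j q"
    by (rule poly_mapping_eqI) (simp add: lookup_flipv lookup_add algebra_simps)
  show "flipv j (cst c * p) = cst c * flipv j p"
    by (rule poly_mapping_eqI) (simp add: lookup_flipv lookup_cst_mult)
  show "flipv j (var l * p) = flipv j (var l) * flipv j p"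
  proof (rule poly_mapping_eqI, cases "l = j")
    fix m
    assume "l = j"
    moreover have "(-1::complex) ^ Poly_Mapping.lookup m j = - ((-1) ^ (Poly_Mapping.lookup m j - 1))"
      if "0 < Poly_Mapping.lookup m j"
      using that by (cases "Poly_Mapping.lookup m j") simp_all
    ultimately show "Poly_Mapping.lookup (flipv j (var l * p)) m = Poly_Mapping.lookup (flipv j (var l) * flipv j p) m"
      by (auto simp: flipv_var lookup_flipv lookup_var_mult lookup_minus lookup_single
           minus_mult_left[symmetric] lookup_cst_mult[of "-1", unfolded cst_uminus, simplified])
  next
    fix m
    assume "l \<noteq> j"
    then show "Poly_Mapping.lookup (flipv j (var l * p)) m = Poly_Mapping.lookup (flipv j (var l) * flipv j p) m"
      by (auto simp: flipv_var lookup_flipv lookup_var_mult lookup_minus lookup_single)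
  qed
  show "flipv j 1 = 1"
    by (rule poly_mapping_eqI) (simp add: lookup_flipv lookup_one when_def)
qed

interpretation flipv: alg_endo "flipv j" for j
  by (rule alg_endo_flipv)

definition reflv :: "nat \<Rightarrow> nat \<Rightarrow> op" where
  "reflv j k p = flipv j (flipv k (swapv j k p))"

lemma alg_endo_reflv: "alg_endo (reflv j k)"
proof -
  have "reflv j k = (\<lambda>p. flipv j ((\<lambda>p. flipv k (swapv j k p)) p))"
    by (simp add: reflv_def fun_eq_iff)
  then show ?thesis
    using alg_endo_comp[OF alg_endo_flipv alg_endo_comp[OF alg_endo_flipv alg_endo_swapv]] by simp
qed

interpretation reflv: alg_endo "reflv j k" for j k
  by (rule alg_endo_reflv)

lemma reflv_var:
  "reflv j k (var l) =
     (if j = k then var l else if l = j then - var k else if l = k then - var j else var l)"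
  by (auto simp: reflv_def swapv_var flipv_var flipv.uminus transpose_def)

lemma transpose_conj:
  "transpose a b (transpose j k l) = transpose (transpose a b j) (transpose a b k) (transpose a b l)"
  unfolding transpose_def by auto

lemma swapv_swapv:
  "swapv a b (swapv j k p) = swapv (transpose a b j) (transpose a b k) (swapv a b p)"
  by (rule alg_endo_comp_eqI[where u = "swapv a b" and v = "swapv j k" and
      u' = "swapv (transpose a b j) (transpose a b k)" and v' = "swapv a b"])
    (simp_all add: alg_endo_swapv swapv_var transpose_conj[symmetric])

lemma swapv_commute: "swapv a b p = swapv b a p"
  by (rule alg_endo_eqI) (simp_all add: alg_endo_swapv swapv_var transpose_commute)

lemma swapv_flipv: "swapv a b (flipv j p) = flipv (transpose a b j) (swapv a b p)"
  by (rule alg_endo_comp_eqI[where u = "swapv a b" and v = "flipv j" and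
      u' = "flipv (transpose a b j)" and v' = "swapv a b"])
    (simp_all add: alg_endo_swapv alg_endo_flipv swapv_var flipv_var swapv.uminus
      inj_eq[OF inj_transpose])

lemma swapv_reflv: "swapv a b (reflv j k p) = reflv (transpose a b j) (transpose a b k) (swapv a b p)"
  unfolding reflv_def swapv_flipv swapv_swapv[of a b j k p] ..

lemma flipv_commute: "flipv a (flipv j p) = flipv j (flipv a p)"
  by (rule alg_endo_comp_eqI[where u = "flipv a" and v = "flipv j" and u' = "flipv j" and v' = "flipv a"])
    (auto simp: alg_endo_flipv flipv_var flipv.uminus)

lemma flipv_swapv_other: "a \<noteq> j \<Longrightarrow> a \<noteq> k \<Longrightarrow> flipv a (swapv j k p) = swapv j k (flipv a p)"
  using swapv_flipv[of j k a p] by simp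

lemma flipv_swapv_in: "a = j \<or> a = k \<Longrightarrow> flipv a (swapv j k p) = reflv j k (flipv a p)"
  by (rule alg_endo_comp_eqI[where u = "flipv a" and v = "swapv j k" and
      u' = "reflv j k" and v' = "flipv a"])
    (auto simp: alg_endo_flipv alg_endo_swapv alg_endo_reflv flipv_var swapv_var reflv_var
      reflv.uminus swapv.uminus flipv.uminus transpose_def)

lemma flipv_reflv_in: "a = j \<or> a = k \<Longrightarrow> flipv a (reflv j k p) = swapv j k (flipv a p)"
  by (rule alg_endo_comp_eqI[where u = "flipv a" and v = "reflv j k" and
      u' = "swapv j k" and v' = "flipv a"])
    (auto simp: alg_endo_flipv alg_endo_swapv alg_endo_reflv flipv_var swapv_var reflv_var
      reflv.uminus swapv.uminus flipv.uminus transpose_def)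

lemma flipv_reflv_other: "a \<noteq> j \<Longrightarrow> a \<noteq> k \<Longrightarrow> flipv a (reflv j k p) = reflv j k (flipv a p)"
  unfolding reflv_def flipv_commute[of a j] flipv_commute[of a k] by (simp add: flipv_swapv_other)

lemma reflv_commute: "reflv j k p = reflv k j p"
  unfolding reflv_def swapv_commute[of j k] flipv_commute[of j k] ..

lemma vars_in_swapv:
  assumes "a \<in> V" "b \<in> V" "vars_in V p"
  shows "vars_in V (swapv a b p)"
  using assms(3)
proof (induction p rule: mpoly_induct)
  case (const c)
  then show ?case
    by (simp add: swapv.cst vars_in_cst)
next
  case (plus p q)
  then show ?case
    by (simp add: swapv.add vars_in_add)
next
  case (var l p)
  have "transpose a b l \<in> V"
    using assms var by (auto simp: transpose_def)
  then show ?case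
    using var by (simp add: swapv.var_mult swapv_var vars_in_var_mult)
qed

lemma pdivide_eqI: "L \<noteq> 0 \<Longrightarrow> L * q = p \<Longrightarrow> pdivide p L = q"
  unfolding pdivide_def by (rule the_equality) auto

definition divdiff :: "op \<Rightarrow> mpoly \<Rightarrow> op" where
  "divdiff w L p = pdivide (p - w p) L"

locale divided_difference = alg_endo +
  fixes L :: mpoly
  assumes L_neq_0: "L \<noteq> 0"
    and dvd_var_diff: "L dvd var l - w (var l)"
begin

lemma dvd_diff: "L dvd p - w p"
proof -
  have "vars_in UNIV p" by simp
  then show ?thesis
  proof (induction p rule: mpoly_induct)
    case (const c)
    then show ?case
      by (simp add: cst)
  next
    case (plus p q)
    have "p + q - w (p + q) = (p - w p) + (q - w q)"
      by (simp add: add)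
    with plus.IH show ?case
      by (metis dvd_add)
  next
    case (var l p)
    have "var l * p - w (var l * p) = var l * (p - w p) + (var l - w (var l)) * w p"
      unfolding var_mult by (simp add: algebra_simps)
    with var.IH dvd_var_diff[of l] show ?case
      by (metis dvd_add dvd_mult dvd_mult2)
  qed
qed

lemma mult_divdiff: "L * divdiff w L p = p - w p"
proof -
  obtain q where "p - w p = L * q"
    using dvd_diff by (rule dvdE)
  then show ?thesis
    using pdivide_eqI[OF L_neq_0] by (simp add: divdiff_def)
qed

lemma divdiff_eqI: "L * q = p - w p \<Longrightarrow> divdiff w L p = q"
  unfolding divdiff_def by (rule pdivide_eqI[OF L_neq_0])

lemma divdiff_add: "divdiff w L (p + q) = divdiff w L p + divdiff w L q"
  by (rule divdiff_eqI) (simp add: distrib_left mult_divdiff add)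

lemma divdiff_cst_mult: "divdiff w L (cst c * p) = cst c * divdiff w L p"
  by (rule divdiff_eqI)
    (simp add: mult.left_commute[of L] mult_divdiff cst_mult right_diff_distrib)

lemma divdiff_cst: "divdiff w L (cst c) = 0"
  by (rule divdiff_eqI) (simp add: cst)

lemma divdiff_var_mult:
  "divdiff w L (var l * p) = var l * divdiff w L p + divdiff w L (var l) * w p"
proof (rule divdiff_eqI)
  have "L * (var l * divdiff w L p + divdiff w L (var l) * w p)
      = var l * (L * divdiff w L p) + (L * divdiff w L (var l)) * w p"
    by (simp only: distrib_left mult.left_commute mult.assoc)
  also have "\<dots> = var l * p - w (var l * p)"
    unfolding mult_divdiff var_mult by (simp add: algebra_simps)
  finally show "L * (var l * divdiff w L p + divdiff w L (var l) * w p) = var l * p - w (var l * p)" .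
qed

end

lemma divided_difference_swapv:
  assumes "j \<noteq> k"
  shows "divided_difference (swapv j k) (var j - var k)"
proof (rule divided_difference.intro[OF alg_endo_swapv], unfold_locales)
  show "var j - var k \<noteq> 0"
    using assms by (rule var_diff_var_neq_0)
  show "var j - var k dvd var l - swapv j k (var l)" for l
    by (auto simp: swapv_var transpose_def) (metis dvd_minus_iff dvd_refl minus_diff_eq)
qed

lemma divided_difference_reflv:
  assumes "j \<noteq> k"
  shows "divided_difference (reflv j k) (var j + var k)"
proof (rule divided_difference.intro[OF alg_endo_reflv], unfold_locales)
  show "var j + var k \<noteq> 0"
    using assms by (rule var_add_var_neq_0)
  show "var j + var k dvd var l - reflv j k (var l)" for l
    using assms by (auto simp: reflv_var add.commute)
qed

lemma divided_difference_flipv: "divided_difference (flipv j) (var j)"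
proof (rule divided_difference.intro[OF alg_endo_flipv], unfold_locales)
  show "var j \<noteq> 0"
    by (rule var_neq_0)
  show "var j dvd var l - flipv j (var l)" for l
    by (auto simp: flipv_var)
qed

lemma divdiff_swapv_var:
  "j \<noteq> k \<Longrightarrow> divdiff (swapv j k) (var j - var k) (var l) =
     cst (if l = j then 1 else if l = k then -1 else 0)"
  unfolding divdiff_def
  by (rule pdivide_eqI[OF var_diff_var_neq_0]) (auto simp: swapv_var transpose_def cst_uminus)

lemma divdiff_reflv_var:
  "j \<noteq> k \<Longrightarrow> divdiff (reflv j k) (var j + var k) (var l) =
     cst (if l = j then 1 else if l = k then 1 else 0)"
  unfolding divdiff_def
  by (rule pdivide_eqI[OF var_add_var_neq_0]) (auto simp: reflv_var)

lemma divdiff_flipv_var: "divdiff (flipv j) (var j) (var l) = cst (if l = j then 2 else 0)"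
  unfolding divdiff_def
  by (rule pdivide_eqI[OF var_neq_0]) (auto simp: flipv_var cst_numeral)

text \<open>The divided differences occurring in the Dunkl operators get names of their own, so that
  \<open>algebra_simps\<close> cannot reorder the divisors \<open>var j - var k\<close> and \<open>var j + var k\<close> and thereby
  block the rewrite rules below.\<close>

definition swap_divdiff :: "nat \<Rightarrow> nat \<Rightarrow> op" where
  "swap_divdiff j k = divdiff (swapv j k) (var j - var k)"

definition refl_divdiff :: "nat \<Rightarrow> nat \<Rightarrow> op" where
  "refl_divdiff j k = divdiff (reflv j k) (var j + var k)"

definition flip_divdiff :: "nat \<Rightarrow> op" where
  "flip_divdiff j = divdiff (flipv j) (var j)"

lemmas swap_divdiff_add =
  divided_difference.divdiff_add[OF divided_difference_swapv, folded swap_divdiff_def]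
lemmas swap_divdiff_cst_mult =
  divided_difference.divdiff_cst_mult[OF divided_difference_swapv, folded swap_divdiff_def]
lemmas swap_divdiff_cst =
  divided_difference.divdiff_cst[OF divided_difference_swapv, folded swap_divdiff_def]
lemmas refl_divdiff_add =
  divided_difference.divdiff_add[OF divided_difference_reflv, folded refl_divdiff_def]
lemmas refl_divdiff_cst_mult =
  divided_difference.divdiff_cst_mult[OF divided_difference_reflv, folded refl_divdiff_def]
lemmas refl_divdiff_cst =
  divided_difference.divdiff_cst[OF divided_difference_reflv, folded refl_divdiff_def]
lemmas flip_divdiff_add =
  divided_difference.divdiff_add[OF divided_difference_flipv, folded flip_divdiff_def]
lemmas flip_divdiff_cst_mult =
  divided_difference.divdiff_cst_mult[OF divided_difference_flipv, folded flip_divdiff_def]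
lemmas flip_divdiff_cst =
  divided_difference.divdiff_cst[OF divided_difference_flipv, folded flip_divdiff_def]

lemma swap_divdiff_var_mult:
  "j \<noteq> k \<Longrightarrow> swap_divdiff j k (var l * p) =
     var l * swap_divdiff j k p + cst (if l = j then 1 else if l = k then -1 else 0) * swapv j k p"
  by (simp add: swap_divdiff_def divided_difference.divdiff_var_mult[OF divided_difference_swapv]
      divdiff_swapv_var)

lemma refl_divdiff_var_mult:
  "j \<noteq> k \<Longrightarrow> refl_divdiff j k (var l * p) =
     var l * refl_divdiff j k p + cst (if l = j then 1 else if l = k then 1 else 0) * reflv j k p"
  by (simp add: refl_divdiff_def divided_difference.divdiff_var_mult[OF divided_difference_reflv]
      divdiff_reflv_var)

lemma flip_divdiff_var_mult:
  "flip_divdiff j (var l * p) = var l * flip_divdiff j p + cst (if l = j then 2 else 0) * flipv j p"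
  by (simp add: flip_divdiff_def divided_difference.divdiff_var_mult[OF divided_difference_flipv]
      divdiff_flipv_var)

lemma lookup_pderivv:
  "Poly_Mapping.lookup (pderivv j p) m =
     of_nat (Poly_Mapping.lookup m j + 1) * Poly_Mapping.lookup p (m + Poly_Mapping.single j 1)"
proof -
  have "inj (\<lambda>m::nat \<Rightarrow>\<^sub>0 nat. m + Poly_Mapping.single j 1)"
    by (rule injI) simp
  then have "finite ((\<lambda>m. m + Poly_Mapping.single j 1) -` {m. Poly_Mapping.lookup p m \<noteq> 0})"
    by (rule finite_vimageI[OF finite_lookup])
  then have "finite {m. of_nat (Poly_Mapping.lookup m j + 1)
      * Poly_Mapping.lookup p (m + Poly_Mapping.single j 1) \<noteq> (0::complex)}"
    by (rule finite_subset[rotated]) (auto simp del: One_nat_def)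
  then show ?thesis
    by (simp add: pderivv_def del: One_nat_def)
qed

lemma pderivv_add: "pderivv j (p + q) = pderivv j p + pderivv j q"
  by (rule poly_mapping_eqI) (simp add: lookup_pderivv lookup_add algebra_simps)

lemma pderivv_cst_mult: "pderivv j (cst c * p) = cst c * pderivv j p"
  by (rule poly_mapping_eqI) (simp add: lookup_pderivv lookup_cst_mult mult.left_commute)

lemma pderivv_cst: "pderivv j (cst c) = 0"
proof (rule poly_mapping_eqI)
  fix m :: "nat \<Rightarrow>\<^sub>0 nat"
  have "m + Poly_Mapping.single j 1 \<noteq> 0"
    by (metis lookup_add lookup_single_eq lookup_zero add_is_0 one_neq_zero)
  then show "Poly_Mapping.lookup (pderivv j (cst c)) m = Poly_Mapping.lookup 0 m"
    by (simp add: lookup_pderivv cst_def lookup_single when_def)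
qed

lemma pderivv_var_mult: "pderivv j (var l * p) = (if l = j then p else 0) + var l * pderivv j p"
proof (rule poly_mapping_eqI, cases "l = j")
  fix m :: "nat \<Rightarrow>\<^sub>0 nat"
  let ?e = "Poly_Mapping.single j 1"
  assume "l = j"
  have "Poly_Mapping.lookup (pderivv j (var l * p)) m
      = of_nat (Poly_Mapping.lookup m j + 1) * Poly_Mapping.lookup p m"
    using \<open>l = j\<close> by (simp add: lookup_pderivv lookup_var_mult lookup_add del: One_nat_def)
  moreover have "m - ?e + ?e = m" and "Poly_Mapping.lookup (m - ?e) j + 1 = Poly_Mapping.lookup m j"
    if "0 < Poly_Mapping.lookup m j"
    using that by (auto simp: poly_mapping_eq_iff fun_eq_iff lookup_add lookup_minus lookup_single when_def)
  then have "Poly_Mapping.lookup (var l * pderivv j p) m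
      = of_nat (Poly_Mapping.lookup m j) * Poly_Mapping.lookup p m"
    using \<open>l = j\<close> by (cases "0 < Poly_Mapping.lookup m j")
      (simp_all add: lookup_pderivv lookup_var_mult del: One_nat_def)
  ultimately show "Poly_Mapping.lookup (pderivv j (var l * p)) m
      = Poly_Mapping.lookup ((if l = j then p else 0) + var l * pderivv j p) m"
    using \<open>l = j\<close> by (simp add: lookup_add algebra_simps)
next
  fix m :: "nat \<Rightarrow>\<^sub>0 nat"
  assume "l \<noteq> j"
  then have "m + Poly_Mapping.single j 1 - Poly_Mapping.single l 1
      = m - Poly_Mapping.single l 1 + Poly_Mapping.single j 1" if "0 < Poly_Mapping.lookup m l"
    using that by (intro poly_mapping_eqI) (auto simp: lookup_add lookup_minus lookup_single when_def)
  moreover have "Poly_Mapping.lookup (m - Poly_Mapping.single l 1) j = Poly_Mapping.lookup m j"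
    using \<open>l \<noteq> j\<close> by (simp add: lookup_minus lookup_single)
  ultimately show "Poly_Mapping.lookup (pderivv j (var l * p)) m
      = Poly_Mapping.lookup ((if l = j then p else 0) + var l * pderivv j p) m"
    using \<open>l \<noteq> j\<close> by (auto simp: lookup_pderivv lookup_var_mult lookup_add lookup_single simp del: One_nat_def)
qed

section \<open>The type B Dunkl operators\<close>

locale dunkl =
  fixes \<beta> :: nat and \<gamma> :: complex and N :: nat
begin

abbreviation cb :: mpoly where
  "cb \<equiv> cst (of_nat \<beta>)"

abbreviation others :: "nat \<Rightarrow> nat set" where
  "others j \<equiv> {k. k < N \<and> k \<noteq> j}"

abbreviation D :: "nat \<Rightarrow> op" where
  "D j \<equiv> DB \<beta> \<gamma> N j"

lemma DB_eq_divdiff: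
  "D j p = pderivv j p + cb * (\<Sum>k\<in>others j. swap_divdiff j k p + refl_divdiff j k p)
     + cst \<gamma> * flip_divdiff j p"
  by (simp add: DB_def swap_divdiff_def refl_divdiff_def flip_divdiff_def divdiff_def reflv_def)

text \<open>The commutator \<open>[D\<^sup>B\<^sub>j, z\<^sub>l]\<close>.\<close>

definition commB :: "nat \<Rightarrow> nat \<Rightarrow> op" where
  "commB j l p =
     (if l = j then p + cb * (\<Sum>k\<in>others j. swapv j k p + reflv j k p) + cst (2 * \<gamma>) * flipv j p
      else if l < N then cb * (reflv j l p - swapv j l p) else 0)"

lemma DB_add: "D j (p + q) = D j p + D j q"
  by (simp add: DB_eq_divdiff pderivv_add sum.distrib algebra_simps
      swap_divdiff_add refl_divdiff_add flip_divdiff_add)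

lemma DB_cst_mult: "D j (cst c * p) = cst c * D j p"
proof -
  have "(\<Sum>k\<in>others j. swap_divdiff j k (cst c * p) + refl_divdiff j k (cst c * p))
      = cst c * (\<Sum>k\<in>others j. swap_divdiff j k p + refl_divdiff j k p)"
    by (simp add: swap_divdiff_cst_mult refl_divdiff_cst_mult sum_distrib_left distrib_left)
  then show ?thesis
    unfolding DB_eq_divdiff pderivv_cst_mult flip_divdiff_cst_mult by (simp add: algebra_simps)
qed

lemma DB_cst: "D j (cst c) = 0"
  by (simp add: DB_eq_divdiff pderivv_cst
      swap_divdiff_cst refl_divdiff_cst flip_divdiff_cst)

lemma DB_0: "D j 0 = 0"
  using DB_cst[of j 0] by simp

lemma DB_diff: "D j (p - q) = D j p - D j q"
  using DB_add[of j "p - q" q] by simp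

lemma DB_sum: "D j (sum f S) = (\<Sum>k\<in>S. D j (f k))"
  by (induction S rule: infinite_finite_induct) (simp_all add: DB_0 DB_add)

lemma sum_others_coeff_mult:
  "(\<Sum>k\<in>others j. cst (if l = j then 1 else if l = k then s else 0) * f k) =
     (if l = j then sum f (others j) else if l < N then cst s * f l else 0)"
proof (cases "l = j")
  case False
  then have "(\<Sum>k\<in>others j. cst (if l = j then 1 else if l = k then s else 0) * f k)
      = (\<Sum>k\<in>others j. if k = l then cst s * f l else 0)"
    by (intro sum.cong) auto
  then show ?thesis
    using False by (simp add: sum.delta')
qed simp

lemma DB_var_mult: "D j (var l * p) = var l * D j p + commB j l p"
proof -
  have "swap_divdiff j k (var l * p) + refl_divdiff j k (var l * p)
      = var l * (swap_divdiff j k p + refl_divdiff j k p)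
        + cst (if l = j then 1 else if l = k then -1 else 0) * swapv j k p
        + cst (if l = j then 1 else if l = k then 1 else 0) * reflv j k p"
    if "k \<in> others j" for k
    using that by (simp add: swap_divdiff_var_mult refl_divdiff_var_mult distrib_left add_ac)
  then have "(\<Sum>k\<in>others j. swap_divdiff j k (var l * p) + refl_divdiff j k (var l * p))
      = var l * (\<Sum>k\<in>others j. swap_divdiff j k p + refl_divdiff j k p)
        + (\<Sum>k\<in>others j. cst (if l = j then 1 else if l = k then -1 else 0) * swapv j k p)
        + (\<Sum>k\<in>others j. cst (if l = j then 1 else if l = k then 1 else 0) * reflv j k p)"
    by (simp add: sum.distrib sum_distrib_left distrib_left)
  then show ?thesis
    unfolding DB_eq_divdiff pderivv_var_mult flip_divdiff_var_mult commB_def sum_others_coeff_mult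
    by (simp add: algebra_simps cst_mult_cst cst_uminus cst_numeral[symmetric] sum.distrib)
qed

lemma bij_betw_transpose_others:
  assumes "a < N" "b < N"
  shows "bij_betw (transpose a b) (others j) (others (transpose a b j))"
proof (rule bij_betw_byWitness[where f' = "transpose a b"])
  show "transpose a b ` others j \<subseteq> others (transpose a b j)"
    using assms by (auto simp: transpose_def)
  show "transpose a b ` others (transpose a b j) \<subseteq> others j"
    using assms by (auto simp: transpose_def split: if_splits)
qed simp_all

lemma swapv_commB:
  assumes "a < N" "b < N"
  shows "swapv a b (commB j l p) = commB (transpose a b j) (transpose a b l) (swapv a b p)"
proof -
  have "swapv a b (\<Sum>k\<in>others j. swapv j k p + reflv j k p)
      = (\<Sum>k\<in>others j. swapv (transpose a b j) (transpose a b k) (swapv a b p)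
          + reflv (transpose a b j) (transpose a b k) (swapv a b p))"
    unfolding swapv.sum swapv.add swapv_swapv[of a b j] swapv_reflv[of a b j] ..
  also have "\<dots> = (\<Sum>k\<in>others (transpose a b j).
      swapv (transpose a b j) k (swapv a b p) + reflv (transpose a b j) k (swapv a b p))"
    by (rule sum.reindex_bij_betw[OF bij_betw_transpose_others[OF assms]])
  finally have "swapv a b (\<Sum>k\<in>others j. swapv j k p + reflv j k p) = \<dots>" .
  moreover have "transpose a b l < N \<longleftrightarrow> l < N"
    using assms by (auto simp: transpose_def)
  ultimately show ?thesis
    unfolding commB_def
    by (simp add: swapv.add swapv.cst_mult swapv.diff swapv.zero swapv_flipv swapv_swapv[of a b j]
        swapv_reflv[of a b j] inj_eq[OF inj_transpose])
qed

lemma swapv_DB: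
  assumes "a < N" "b < N"
  shows "swapv a b (D j p) = D (transpose a b j) (swapv a b p)"
proof -
  have "vars_in UNIV p" by simp
  then show ?thesis
  proof (induction p rule: mpoly_induct)
    case (const c)
    then show ?case
      by (simp add: DB_cst swapv.cst swapv.zero)
  next
    case (plus p q)
    then show ?case
      by (simp add: DB_add swapv.add)
  next
    case (var l p)
    then show ?case
      by (simp only: DB_var_mult swapv.add swapv.var_mult swapv_var swapv_commB[OF assms])
  qed
qed

lemma flipv_commB:
  "flipv a (commB j l p) = cst (if (a = j) = (l = a) then 1 else -1) * commB j l (flipv a p)"
proof (cases "l = j")
  case True
  have "flipv a (swapv j k p) + flipv a (reflv j k p) = swapv j k (flipv a p) + reflv j k (flipv a p)"
    if "j \<noteq> k" for k
    using that
    by (cases "a = j \<or> a = k") (auto simp: flipv_swapv_in flipv_reflv_in flipv_swapv_other flipv_reflv_other)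
  then have "flipv a (\<Sum>k\<in>others j. swapv j k p + reflv j k p)
      = (\<Sum>k\<in>others j. swapv j k (flipv a p) + reflv j k (flipv a p))"
    unfolding flipv.sum flipv.add by (intro sum.cong) auto
  moreover have "(a = j) = (l = a)"
    using True by auto
  ultimately show ?thesis
    using True unfolding commB_def
    by (simp add: flipv.add flipv.cst_mult flipv_commute[of a j])
next
  case False
  then show ?thesis
    by (auto simp: commB_def flipv.cst_mult flipv.diff flipv.zero
        flipv_swapv_in flipv_reflv_in flipv_swapv_other flipv_reflv_other cst_uminus)
qed

lemma flipv_DB: "flipv a (D j p) = cst (if a = j then -1 else 1) * D j (flipv a p)"
proof -
  have "vars_in UNIV p" by simp
  then show ?thesis
  proof (induction p rule: mpoly_induct)
    case (const c)
    then show ?case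
      by (simp add: DB_cst flipv.cst flipv.zero)
  next
    case (plus p q)
    then show ?case
      by (simp add: DB_add flipv.add distrib_left)
  next
    case (var l p)
    define e where "e = cst (if a = j then -1 else 1)"
    define el where "el = cst (if l = a then -1 else 1)"
    have "flipv a (D j (var l * p)) =
        el * var l * (e * D j (flipv a p)) + (e * el) * commB j l (flipv a p)"
      unfolding DB_var_mult flipv.add flipv.var_mult flipv_var_eq_cst_mult flipv_commB var.IH
        e_def el_def
      by (auto simp: cst_mult_cst)
    also have "\<dots> = e * (el * (var l * D j (flipv a p) + commB j l (flipv a p)))"
      by (simp only: distrib_left mult.assoc mult.left_commute)
    also have "\<dots> = e * D j (flipv a (var l * p))"
      unfolding flipv.var_mult flipv_var_eq_cst_mult mult.assoc el_def DB_cst_mult DB_var_mult ..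
    finally show ?case
      unfolding e_def .
  qed
qed

lemma reflv_DB:
  assumes "j \<noteq> k" "j < N" "k < N"
  shows "reflv j k (D l p) = cst (if l = j \<or> l = k then -1 else 1) * D (transpose j k l) (reflv j k p)"
proof -
  have "reflv j k (D l p) = flipv j (flipv k (D (transpose j k l) (swapv j k p)))"
    unfolding reflv_def swapv_DB[OF assms(2,3)] ..
  also have "\<dots> = cst (if k = transpose j k l then -1 else 1)
      * (cst (if j = transpose j k l then -1 else 1) * D (transpose j k l) (reflv j k p))"
    unfolding flipv_DB flipv.cst_mult reflv_def ..
  also have "\<dots> = cst (if l = j \<or> l = k then -1 else 1) * D (transpose j k l) (reflv j k p)"
    using assms(1) by (auto simp: transpose_def cst_mult_cst_mult)
  finally show ?thesis .
qed

lemma swapv_DB_other: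
  "j < N \<Longrightarrow> m < N \<Longrightarrow> k \<noteq> j \<Longrightarrow> k \<noteq> m \<Longrightarrow> swapv j m (D k p) = D k (swapv j m p)"
  using swapv_DB[of j m k p] by simp

lemma reflv_DB_other:
  "j < N \<Longrightarrow> m < N \<Longrightarrow> j \<noteq> m \<Longrightarrow> k \<noteq> j \<Longrightarrow> k \<noteq> m \<Longrightarrow> reflv j m (D k p) = D k (reflv j m p)"
  using reflv_DB[of j m k p] by simp

definition reflsum :: "nat \<Rightarrow> op" where
  "reflsum j q = (\<Sum>m\<in>others j. swapv j m q + reflv j m q)"

lemma commB_same: "commB j j q = q + cb * reflsum j q + cst (2 * \<gamma>) * flipv j q"
  by (simp add: commB_def reflsum_def)

lemma commB_other: "l \<noteq> j \<Longrightarrow> l < N \<Longrightarrow> commB j l q = cb * (reflv j l q - swapv j l q)"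
  by (simp add: commB_def)

lemma commB_outside: "l \<noteq> j \<Longrightarrow> \<not> l < N \<Longrightarrow> commB j l q = 0"
  by (simp add: commB_def)

lemma reflsum_DB:
  assumes "j < N" "k < N" "j \<noteq> k"
  shows "reflsum j (D k p) =
    D k (reflsum j p) + D j (swapv j k p) - D j (reflv j k p) - D k (swapv j k p) - D k (reflv j k p)"
proof -
  have k: "k \<in> others j"
    using assms by simp
  have "reflsum j (D k p) = (swapv j k (D k p) + reflv j k (D k p))
      + (\<Sum>m\<in>others j - {k}. swapv j m (D k p) + reflv j m (D k p))"
    unfolding reflsum_def by (rule sum.remove[OF _ k]) simp
  also have "(\<Sum>m\<in>others j - {k}. swapv j m (D k p) + reflv j m (D k p))
      = (\<Sum>m\<in>others j - {k}. D k (swapv j m p) + D k (reflv j m p))"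
    using assms by (intro sum.cong) (auto simp: swapv_DB_other reflv_DB_other)
  also have "swapv j k (D k p) = D j (swapv j k p)"
    using swapv_DB[OF assms(1,2), of k p] by simp
  also have "reflv j k (D k p) = - D j (reflv j k p)"
    using reflv_DB[OF assms(3,1,2), of k p] by (simp add: cst_uminus)
  also have "D k (reflsum j p) = (D k (swapv j k p) + D k (reflv j k p))
      + (\<Sum>m\<in>others j - {k}. D k (swapv j m p) + D k (reflv j m p))"
    unfolding reflsum_def DB_sum DB_add by (rule sum.remove[OF _ k]) simp
  ultimately show ?thesis
    by (simp add: algebra_simps)
qed

lemma commB_DB_same:
  assumes "j < N" "k < N" "j \<noteq> k"
  shows "commB j j (D k p) + D j (commB k j p) = commB k j (D j p) + D k (commB j j p)"
proof -
  have "flipv j (D k p) = D k (flipv j p)"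
    using flipv_DB[of j k p] assms by simp
  moreover have "reflv k j (D j p) = - D k (reflv j k p)"
    using reflv_DB[OF assms(3,1,2), of j p] by (simp add: cst_uminus reflv_commute[of k j])
  moreover have "swapv k j (D j p) = D k (swapv j k p)"
    using swapv_DB[OF assms(1,2), of j p] by (simp add: swapv_commute[of k j])
  moreover have "reflv k j p = reflv j k p" "swapv k j p = swapv j k p"
    by (simp_all add: reflv_commute swapv_commute)
  ultimately show ?thesis
    using assms
    unfolding commB_same commB_other[OF assms(3,1)] reflsum_DB[OF assms]
      DB_add DB_cst_mult DB_diff
    by (simp add: algebra_simps)
qed

lemma commB_DB:
  assumes "j < N" "k < N"
  shows "commB j l (D k p) + D j (commB k l p) = commB k l (D j p) + D k (commB j l p)"
proof -
  consider "j = k" | "j \<noteq> k" "l = j" | "j \<noteq> k" "l = k"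
    | "j \<noteq> k" "l \<noteq> j" "l \<noteq> k" "l < N" | "l \<noteq> j" "l \<noteq> k" "\<not> l < N"
    by blast
  then show ?thesis
  proof cases
    case 1
    then show ?thesis by simp
  next
    case 2
    then show ?thesis
      using commB_DB_same[OF assms] by simp
  next
    case 3
    then show ?thesis
      using commB_DB_same[OF assms(2,1), of p] by (simp add: add.commute)
  next
    case 4
    then have "commB j l (D k p) = D k (commB j l p)" "commB k l (D j p) = D j (commB k l p)"
      using assms by (simp_all add: commB_other reflv_DB_other swapv_DB_other DB_cst_mult DB_diff)
    then show ?thesis
      by (simp add: add.commute)
  next
    case 5
    then show ?thesis
      by (simp add: commB_outside DB_0)
  qed
qed

theorem DB_commute:
  assumes "j < N" "k < N"
  shows "D j (D k p) = D k (D j p)"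
proof -
  have "vars_in UNIV p" by simp
  then show ?thesis
  proof (induction p rule: mpoly_induct)
    case (const c)
    then show ?case
      by (simp add: DB_cst DB_0)
  next
    case (plus p q)
    then show ?case
      by (simp add: DB_add)
  next
    case (var l p)
    have "D j (D k (var l * p)) = var l * D j (D k p) + (commB j l (D k p) + D j (commB k l p))"
      unfolding DB_var_mult DB_add by (simp add: add.assoc)
    also have "\<dots> = var l * D k (D j p) + (commB k l (D j p) + D k (commB j l p))"
      unfolding var.IH commB_DB[OF assms] ..
    also have "\<dots> = D k (D j (var l * p))"
      unfolding DB_var_mult DB_add by (simp add: add.assoc)
    finally show ?case .
  qed
qed

section \<open>The representation \<open>\<rho>\<^sup>B\<close>\<close>

text \<open>\<open>cre j\<close> is \<open>sqrt 2\<close> times \<open>bdag \<beta> \<gamma> N j\<close>; this normalisation keeps \<open>sqrt 2\<close> out of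
  all later computations.\<close>

definition cre :: "nat \<Rightarrow> op" where
  "cre j p = cst 2 * (var j * p) - D j p"

abbreviation B :: "nat \<Rightarrow> op" where
  "B j \<equiv> Bsq \<beta> \<gamma> N j"

definition hB :: "nat \<Rightarrow> op" where
  "hB j p = cst (1/4) * cre j (D j p) + cst (1/2) * cb * (\<Sum>k<j. swapv j k p + reflv j k p)"

lemma inverse_sqrt2_mult_inverse_sqrt2:
  "cst (1 / complex_of_real (sqrt 2)) * (cst (1 / complex_of_real (sqrt 2)) * p) = cst (1/2) * p"
proof -
  have "complex_of_real (sqrt 2) * complex_of_real (sqrt 2) = 2"
    by (simp add: of_real_mult[symmetric])
  then have "(1 / complex_of_real (sqrt 2)) * (1 / complex_of_real (sqrt 2)) = 1 / 2"
    by (simp add: field_simps)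
  then show ?thesis
    by (simp only: cst_mult_cst_mult)
qed

lemma bdag_eq_cre: "bdag \<beta> \<gamma> N j p = cst (1 / complex_of_real (sqrt 2)) * cre j p"
  unfolding bdag_def cre_def by (simp add: algebra_simps)

lemma cre_add: "cre j (p + q) = cre j p + cre j q"
  by (simp add: cre_def DB_add algebra_simps)

lemma cre_cst_mult: "cre j (cst c * p) = cst c * cre j p"
  unfolding cre_def DB_cst_mult by (simp add: algebra_simps)

lemma cre_0: "cre j 0 = 0"
  by (simp add: cre_def DB_0)

lemma cre_diff: "cre j (p - q) = cre j p - cre j q"
  using cre_add[of j "p - q" q] by simp

lemma cre_uminus: "cre j (- p) = - cre j p"
  using cre_diff[of j 0 p] by (simp add: cre_0)

lemma cre_sum: "cre j (sum f S) = (\<Sum>k\<in>S. cre j (f k))"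
  by (induction S rule: infinite_finite_induct) (simp_all add: cre_0 cre_add)

lemma Bsq_eq_cre: "B j p = cst (1/4) * cre j (cre j p)"
  unfolding Bsq_def bdag_eq_cre cre_cst_mult inverse_sqrt2_mult_inverse_sqrt2
  by (rule poly_mapping_eqI) (simp add: lookup_linear_simps)

lemma half_htB_eq_hB: "cst (1/2) * htB \<beta> \<gamma> N j p = hB j p"
  unfolding htB_def bdag_eq_cre bann_def cre_cst_mult inverse_sqrt2_mult_inverse_sqrt2 hB_def
    reflv_def[symmetric]
  by (rule poly_mapping_eqI) (simp add: lookup_linear_simps algebra_simps)

lemma Bsq_add: "B j (p + q) = B j p + B j q"
  by (simp add: Bsq_eq_cre cre_add distrib_left)

lemma Bsq_cst_mult: "B j (cst c * p) = cst c * B j p"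
  by (simp add: Bsq_eq_cre cre_cst_mult mult.left_commute)

lemma Bsq_0: "B j 0 = 0"
  by (simp add: Bsq_eq_cre cre_0)

lemma Bsq_sum: "B j (sum f S) = (\<Sum>k\<in>S. B j (f k))"
  by (induction S rule: infinite_finite_induct) (simp_all add: Bsq_0 Bsq_add)

lemma cre_var_mult: "cre j (var l * p) = var l * cre j p - commB j l p"
  unfolding cre_def DB_var_mult by (simp add: algebra_simps)

lemma DB_cre:
  assumes "j < N" "l < N"
  shows "D j (cre l p) = cre l (D j p) + cst 2 * commB j l p"
proof -
  have "D j (cre l p) = cst 2 * (var l * D j p + commB j l p) - D j (D l p)"
    unfolding cre_def DB_diff DB_cst_mult DB_var_mult ..
  then show ?thesis
    unfolding cre_def DB_commute[OF assms] by (simp add: algebra_simps)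
qed

lemma cre_commute:
  assumes "j < N" "l < N"
  shows "cre j (cre l p) = cre l (cre j p)"
proof (cases "j = l")
  case False
  have comm: "commB j l p = commB l j p"
    using False assms by (simp add: commB_other reflv_commute swapv_commute)
  have jl: "cre j (cre l p) = cst 2 * (var l * (cst 2 * (var j * p) - D j p) - commB j l p)
      - (cst 2 * (var j * D l p) - D j (D l p))"
    by (simp only: cre_def[of l] cre_diff cre_cst_mult cre_var_mult) (simp only: cre_def[of j])
  have lj: "cre l (cre j p) = cst 2 * (var j * (cst 2 * (var l * p) - D l p) - commB l j p)
      - (cst 2 * (var l * D j p) - D l (D j p))"
    by (simp only: cre_def[of j] cre_diff cre_cst_mult cre_var_mult) (simp only: cre_def[of l])
  show ?thesis
    unfolding jl lj comm DB_commute[OF assms] by (simp add: algebra_simps)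
qed simp

lemma Bsq_commute:
  assumes "j < N" "l < N"
  shows "B j (B l p) = B l (B j p)"
  unfolding Bsq_eq_cre cre_cst_mult cre_commute[OF assms, of "cre l _"] cre_commute[OF assms]
  by (simp add: mult.left_commute cre_commute[OF assms])

lemma swapv_cre: "a < N \<Longrightarrow> b < N \<Longrightarrow> swapv a b (cre j p) = cre (transpose a b j) (swapv a b p)"
  unfolding cre_def by (simp add: swapv.diff swapv.cst_mult swapv.var_mult swapv_var swapv_DB)

lemma flipv_cre: "flipv a (cre j p) = cst (if a = j then -1 else 1) * cre j (flipv a p)"
  unfolding cre_def
  by (simp add: flipv.diff flipv.cst_mult flipv.var_mult flipv_var flipv_DB right_diff_distrib cst_uminus)

lemma reflv_cre:
  assumes "j \<noteq> k" "j < N" "k < N"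
  shows "reflv j k (cre l p) = cst (if l = j \<or> l = k then -1 else 1) * cre (transpose j k l) (reflv j k p)"
proof -
  have "reflv j k (cre l p) = flipv j (flipv k (cre (transpose j k l) (swapv j k p)))"
    unfolding reflv_def swapv_cre[OF assms(2,3)] ..
  also have "\<dots> = cst (if k = transpose j k l then -1 else 1)
      * (cst (if j = transpose j k l then -1 else 1) * cre (transpose j k l) (reflv j k p))"
    unfolding flipv_cre flipv.cst_mult reflv_def ..
  also have "\<dots> = cst (if l = j \<or> l = k then -1 else 1) * cre (transpose j k l) (reflv j k p)"
    using assms(1) by (auto simp: transpose_def cst_mult_cst_mult)
  finally show ?thesis .
qed

lemma swapv_Bsq: "a < N \<Longrightarrow> b < N \<Longrightarrow> swapv a b (B j p) = B (transpose a b j) (swapv a b p)"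
  by (simp add: Bsq_eq_cre swapv.cst_mult swapv_cre)

lemma reflv_Bsq:
  assumes "j \<noteq> k" "j < N" "k < N"
  shows "reflv j k (B l p) = B (transpose j k l) (reflv j k p)"
  unfolding Bsq_eq_cre reflv.cst_mult reflv_cre[OF assms] cre_cst_mult
  by (simp add: mult.left_commute cst_mult_cst)

lemma flipv_Bsq: "flipv a (B j p) = B j (flipv a p)"
  unfolding Bsq_eq_cre flipv.cst_mult flipv_cre cre_cst_mult
  by (simp add: mult.left_commute cst_mult_cst)

end

definition flip_invariant :: "nat \<Rightarrow> mpoly \<Rightarrow> bool" where
  "flip_invariant N q \<longleftrightarrow> (\<forall>a<N. flipv a q = q)"

lemma flip_invariant_swapv:
  assumes "a < N" "b < N" "flip_invariant N q"
  shows "flip_invariant N (swapv a b q)"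
  unfolding flip_invariant_def
proof (intro allI impI)
  fix c
  assume "c < N"
  then have "flipv (transpose a b c) q = q"
    using assms by (auto simp: flip_invariant_def transpose_def)
  then show "flipv c (swapv a b q) = swapv a b q"
    using swapv_flipv[of a b "transpose a b c" q] by simp
qed

lemma reflv_eq_swapv_if_flip_invariant:
  "j < N \<Longrightarrow> k < N \<Longrightarrow> flip_invariant N q \<Longrightarrow> reflv j k q = swapv j k q"
  using flip_invariant_swapv[of j N k q] by (simp add: reflv_def flip_invariant_def)

lemma flip_invariant_cst_mult: "flip_invariant N p \<Longrightarrow> flip_invariant N (cst c * p)"
  by (simp add: flip_invariant_def flipv.cst_mult)

lemma flip_invariant_1: "flip_invariant N 1"
  by (simp add: flip_invariant_def flipv.one)

lemma flip_invariant_sum: "(\<And>k. k \<in> S \<Longrightarrow> flip_invariant N (f k)) \<Longrightarrow> flip_invariant N (sum f S)"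
  by (simp add: flip_invariant_def flipv.sum)

lemma (in dunkl) flip_invariant_Bsq: "flip_invariant N q \<Longrightarrow> flip_invariant N (B j q)"
  by (simp add: flip_invariant_def flipv_Bsq)

context dunkl
begin

lemma DA_eq_divdiff: "DA \<beta> N j p = pderivv j p + cb * (\<Sum>k\<in>others j. swap_divdiff j k p)"
  by (simp add: DA_def swap_divdiff_def divdiff_def)

text \<open>The commutator \<open>[D\<^sup>A\<^sub>j, x\<^sub>l]\<close>.\<close>

definition commA :: "nat \<Rightarrow> nat \<Rightarrow> op" where
  "commA j l q =
     (if l = j then q + cb * (\<Sum>k\<in>others j. swapv j k q)
      else if l < N then - (cb * swapv j l q) else 0)"

lemma DA_add: "DA \<beta> N j (p + q) = DA \<beta> N j p + DA \<beta> N j q"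
  by (simp add: DA_eq_divdiff pderivv_add swap_divdiff_add sum.distrib algebra_simps)

lemma DA_cst: "DA \<beta> N j (cst c) = 0"
  by (simp add: DA_eq_divdiff pderivv_cst swap_divdiff_cst)

lemma DA_var_mult: "DA \<beta> N j (var l * p) = var l * DA \<beta> N j p + commA j l p"
proof -
  have "(\<Sum>k\<in>others j. swap_divdiff j k (var l * p))
      = var l * (\<Sum>k\<in>others j. swap_divdiff j k p)
        + (\<Sum>k\<in>others j. cst (if l = j then 1 else if l = k then -1 else 0) * swapv j k p)"
    by (simp add: swap_divdiff_var_mult sum.distrib sum_distrib_left)
  then show ?thesis
    unfolding DA_eq_divdiff pderivv_var_mult commA_def sum_others_coeff_mult
    by (simp add: algebra_simps cst_uminus)
qed

lemma DhatA_add: "DhatA \<beta> N j (p + q) = DhatA \<beta> N j p + DhatA \<beta> N j q"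
  by (simp add: DhatA_def DA_add swapv.add sum.distrib algebra_simps)

lemma DhatA_cst: "DhatA \<beta> N j (cst c) = cb * (\<Sum>k<j. cst c)"
  by (simp add: DhatA_def DA_cst swapv.cst)

lemma DhatA_var_mult:
  "DhatA \<beta> N j (var l * p) = var l * DhatA \<beta> N j p + var j * commA j l p
     + cb * (\<Sum>k<j. (var (transpose j k l) - var l) * swapv j k p)"
proof -
  have "(\<Sum>k<j. swapv j k (var l * p)) = (\<Sum>k<j. var (transpose j k l) * swapv j k p)"
    by (simp add: swapv.var_mult swapv_var)
  also have "\<dots> = var l * (\<Sum>k<j. swapv j k p) + (\<Sum>k<j. (var (transpose j k l) - var l) * swapv j k p)"
    by (simp add: sum_distrib_left sum.distrib[symmetric] algebra_simps)
  finally show ?thesis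
    unfolding DhatA_def DA_var_mult by (simp add: algebra_simps)
qed

lemma vars_in_commA:
  assumes "j < N" "vars_in {..<N} p"
  shows "vars_in {..<N} (commA j l p)"
  unfolding commA_def using assms
  by (auto intro!: vars_in_add vars_in_cst_mult vars_in_sum vars_in_swapv vars_in_uminus vars_in_0)

lemma vars_in_DhatA:
  assumes "j < N" "vars_in {..<N} f"
  shows "vars_in {..<N} (DhatA \<beta> N j f)"
  using assms(2)
proof (induction f rule: mpoly_induct)
  case (const c)
  then show ?case
    unfolding DhatA_cst by (intro vars_in_cst_mult vars_in_sum vars_in_cst)
next
  case (plus p q)
  then show ?case
    by (simp add: DhatA_add vars_in_add)
next
  case (var l p)
  have "vars_in {..<N} ((var (transpose j k l) - var l) * swapv j k p)" if "k < j" for k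
    using assms var that
    by (auto simp: left_diff_distrib transpose_def vars_in_0
        intro!: vars_in_diff vars_in_var_mult vars_in_swapv)
  then show ?case
    unfolding DhatA_var_mult using assms var
    by (intro vars_in_add vars_in_var_mult vars_in_cst_mult vars_in_sum vars_in_commA) auto
qed

end

context dunkl
begin

lemma commB_other_flip_invariant:
  "l \<noteq> j \<Longrightarrow> l < N \<Longrightarrow> j < N \<Longrightarrow> flip_invariant N q \<Longrightarrow> commB j l q = 0"
  by (simp add: commB_other reflv_eq_swapv_if_flip_invariant)

lemma commB_cre_other:
  assumes "l \<noteq> j" "l < N" "j < N" "flip_invariant N q"
  shows "commB j l (cre l q) = - (cst 2 * cb * cre j (swapv j l q))"
proof -
  have "reflv j l (cre l q) = - cre j (swapv j l q)"
    using reflv_cre[of j l l q] assms by (simp add: reflv_eq_swapv_if_flip_invariant cst_uminus)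
  moreover have "swapv j l (cre l q) = cre j (swapv j l q)"
    using swapv_cre[of j l l q] assms by simp
  ultimately have "commB j l (cre l q) = cb * (- cre j (swapv j l q) - cre j (swapv j l q))"
    using assms by (simp add: commB_other)
  also have "\<dots> = - (cst 2 * cb * cre j (swapv j l q))"
    by (rule poly_mapping_eqI) (simp add: lookup_linear_simps algebra_simps)
  finally show ?thesis .
qed

lemma commB_same_flip_invariant:
  assumes "j < N" "flip_invariant N q"
  shows "commB j j q = cst (1 + 2 * \<gamma>) * q + cst 2 * cb * (\<Sum>m\<in>others j. swapv j m q)"
proof -
  have "reflsum j q = cst 2 * (\<Sum>m\<in>others j. swapv j m q)"
    unfolding reflsum_def sum_distrib_left
    using assms by (intro sum.cong) (auto simp: reflv_eq_swapv_if_flip_invariant cst_numeral)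
  moreover have "flipv j q = q"
    using assms by (simp add: flip_invariant_def)
  ultimately show ?thesis
    unfolding commB_same by (simp add: algebra_simps cst_add cst_mult_cst)
qed

lemma commB_same_cre:
  assumes "j < N" "flip_invariant N q"
  shows "commB j j (cre j q) = cst (1 - 2 * \<gamma>) * cre j q"
proof -
  have "swapv j m (cre j q) + reflv j m (cre j q) = 0" if "m \<in> others j" for m
  proof -
    have "swapv j m (cre j q) = cre m (swapv j m q)"
      using swapv_cre[of j m j q] assms that by simp
    moreover have "reflv j m (cre j q) = - cre m (swapv j m q)"
      using reflv_cre[of j m j q] assms that
      by (simp add: reflv_eq_swapv_if_flip_invariant cst_uminus)
    ultimately show ?thesis
      by simp
  qed
  then have "reflsum j (cre j q) = 0"
    unfolding reflsum_def by simp
  moreover have "flipv j (cre j q) = - cre j q"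
    using flipv_cre[of j j q] assms by (simp add: flip_invariant_def cst_uminus)
  ultimately show ?thesis
    unfolding commB_same by (simp add: algebra_simps cst_diff cst_mult_cst)
qed

lemma cre_DB_cre_cre_other:
  assumes "l \<noteq> j" "l < N" "j < N" "flip_invariant N q"
  shows "cre j (D j (cre l (cre l q))) =
    cre l (cre l (cre j (D j q))) - cst 4 * cb * cre j (cre j (swapv j l q))"
proof -
  have "D j (cre l q) = cre l (D j q)"
    using DB_cre[OF assms(3,2), of q] commB_other_flip_invariant[OF assms] by simp
  then have "D j (cre l (cre l q)) = cre l (cre l (D j q)) + cst 2 * commB j l (cre l q)"
    using DB_cre[OF assms(3,2), of "cre l q"] by simp
  also have "\<dots> = cre l (cre l (D j q)) - cst 4 * cb * cre j (swapv j l q)"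
    unfolding commB_cre_other[OF assms]
    by (rule poly_mapping_eqI) (simp add: lookup_linear_simps algebra_simps)
  finally show ?thesis
    by (simp add: cre_diff cre_cst_mult mult.assoc cre_commute[OF assms(3,2)])
qed

lemma cre_DB_cre_cre_same:
  assumes "j < N" "flip_invariant N q"
  shows "cre j (D j (cre j (cre j q))) = cre j (cre j (cre j (D j q))) + cst 4 * cre j (cre j q)
     + cst 4 * cb * (\<Sum>m\<in>others j. cre j (cre j (swapv j m q)))"
proof -
  have "D j (cre j (cre j q)) = cre j (cre j (D j q) + cst 2 * commB j j q) + cst 2 * commB j j (cre j q)"
    using DB_cre[OF assms(1,1), of q] DB_cre[OF assms(1,1), of "cre j q"] by simp
  also have "\<dots> = cre j (cre j (D j q))
      + cst 2 * (cst (1 + 2 * \<gamma>) * cre j q + cst 2 * cb * (\<Sum>m\<in>others j. cre j (swapv j m q)))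
      + cst 2 * (cst (1 - 2 * \<gamma>) * cre j q)"
    unfolding commB_same_flip_invariant[OF assms] commB_same_cre[OF assms] cre_add cre_cst_mult
      cre_sum mult.assoc ..
  also have "\<dots> = cre j (cre j (D j q)) + cst 4 * cre j q
      + cst 4 * cb * (\<Sum>m\<in>others j. cre j (swapv j m q))"
    by (rule poly_mapping_eqI) (simp add: lookup_linear_simps algebra_simps)
  finally show ?thesis
    by (simp add: cre_add cre_cst_mult cre_sum mult.assoc)
qed

lemma hB_Bsq_expand:
  assumes "j < N" "flip_invariant N q"
  shows "hB j (B l q) = cst (1/16) * cre j (D j (cre l (cre l q)))
    + cb * (\<Sum>k<j. B (transpose j k l) (swapv j k q))"
proof -
  have "swapv j k (B l q) + reflv j k (B l q) = cst 2 * B (transpose j k l) (swapv j k q)"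
    if "k < j" for k
  proof -
    have k: "k < N" "j \<noteq> k"
      using that assms by auto
    have r: "reflv j k (B l q) = B (transpose j k l) (swapv j k q)"
      using reflv_Bsq[OF k(2) assms(1) k(1), of l q]
        reflv_eq_swapv_if_flip_invariant[OF assms(1) k(1) assms(2)] by simp
    have s: "swapv j k (B l q) = B (transpose j k l) (swapv j k q)"
      using swapv_Bsq[OF assms(1) k(1)] .
    show ?thesis
      unfolding r s cst_numeral mult_2 ..
  qed
  then have "(\<Sum>k<j. swapv j k (B l q) + reflv j k (B l q))
      = cst 2 * (\<Sum>k<j. B (transpose j k l) (swapv j k q))"
    by (simp add: sum_distrib_left)
  then show ?thesis
    unfolding hB_def Bsq_eq_cre[of l] DB_cst_mult cre_cst_mult
    by (simp add: cst_mult_cst_mult mult.assoc[symmetric] cst_mult_cst)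
qed

lemma Bsq_hB_expand:
  assumes "j < N" "flip_invariant N q"
  shows "B l (hB j q) = cst (1/16) * cre l (cre l (cre j (D j q)))
    + cb * (\<Sum>k<j. B l (swapv j k q))"
proof -
  have "(\<Sum>k<j. B l (swapv j k q) + B l (reflv j k q)) = cst 2 * (\<Sum>k<j. B l (swapv j k q))"
    using assms unfolding sum_distrib_left cst_numeral mult_2
    by (intro sum.cong) (simp_all add: reflv_eq_swapv_if_flip_invariant)
  then show ?thesis
    unfolding hB_def mult.assoc Bsq_add Bsq_cst_mult Bsq_sum Bsq_eq_cre[of l "cre j (D j q)"]
    by (simp add: cst_mult_cst_mult mult.assoc[symmetric] cst_mult_cst)
qed

text \<open>The image under \<open>\<sigma>\<^sup>B\<close> of the Leibniz rule \<open>DhatA_var_mult\<close>; it only holds on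
  polynomials in the squares, which is where all values of \<open>\<sigma>\<^sup>B\<close> lie.\<close>

theorem hB_Bsq:
  assumes "j < N" "l < N" "flip_invariant N q"
  shows "hB j (B l q) = B l (hB j q) + B j (commA j l q)
    + cb * (\<Sum>k<j. B (transpose j k l) (swapv j k q) - B l (swapv j k q))"
proof (cases "l = j")
  case True
  have "B j (commA j l q) = cst (1/4) * cre j (cre j q)
      + cb * (\<Sum>m\<in>others j. cst (1/4) * cre j (cre j (swapv j m q)))"
    unfolding commA_def True if_P[OF refl] Bsq_add Bsq_cst_mult Bsq_sum
    unfolding Bsq_eq_cre ..
  then show ?thesis
    unfolding hB_Bsq_expand[OF assms(1,3)] Bsq_hB_expand[OF assms(1,3)]
    unfolding True cre_DB_cre_cre_same[OF assms(1,3)]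
    by (intro poly_mapping_eqI)
      (simp add: lookup_linear_simps algebra_simps sum_distrib_left sum_subtractf sum.distrib)
next
  case False
  have "B j (commA j l q) = - (cb * (cst (1/4) * cre j (cre j (swapv j l q))))"
    unfolding commA_def if_not_P[OF False] if_P[OF assms(2)] Bsq_eq_cre cre_uminus cre_cst_mult
    by (rule poly_mapping_eqI) (simp add: lookup_linear_simps)
  then show ?thesis
    unfolding hB_Bsq_expand[OF assms(1,3)] Bsq_hB_expand[OF assms(1,3)]
      cre_DB_cre_cre_other[OF False assms(2,1,3)]
    by (intro poly_mapping_eqI)
      (simp add: lookup_linear_simps algebra_simps sum_distrib_left sum_subtractf sum.distrib)
qed

end

section \<open>The map \<open>\<sigma>\<^sup>B\<close>\<close>

context dunkl
begin

abbreviation \<sigma> :: "mpoly \<Rightarrow> mpoly" where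
  "\<sigma> \<equiv> sigmaB \<beta> \<gamma> N"

definition mono_action :: "nat list \<Rightarrow> (nat \<Rightarrow>\<^sub>0 nat) \<Rightarrow> op" where
  "mono_action js m = foldr (\<lambda>j acc. (B j ^^ Poly_Mapping.lookup m j) \<circ> acc) js id"

lemma mono_op_eq_mono_action: "mono_op \<beta> \<gamma> N m = mono_action [0..<N] m"
  unfolding mono_op_def mono_action_def ..

lemma mono_action_cong:
  "(\<And>j. j \<in> set js \<Longrightarrow> Poly_Mapping.lookup m j = Poly_Mapping.lookup m' j) \<Longrightarrow>
     mono_action js m = mono_action js m'"
  by (induction js) (auto simp: mono_action_def)

lemma mono_action_0: "mono_action js 0 p = p"
  by (induction js) (simp_all add: mono_action_def)

lemma Bsq_funpow_commute: "i < N \<Longrightarrow> k < N \<Longrightarrow> B k ((B i ^^ n) p) = (B i ^^ n) (B k p)"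
  by (induction n) (simp_all add: Bsq_commute)

lemma mono_action_add_single:
  "distinct js \<Longrightarrow> set js \<subseteq> {..<N} \<Longrightarrow> k \<in> set js \<Longrightarrow>
     mono_action js (m + Poly_Mapping.single k 1) p = B k (mono_action js m p)"
proof (induction js arbitrary: p)
  case (Cons i js)
  show ?case
  proof (cases "i = k")
    case True
    then have "k \<notin> set js"
      using Cons.prems by auto
    then have "mono_action js (m + Poly_Mapping.single k 1) = mono_action js m"
      by (intro mono_action_cong) (auto simp: lookup_add lookup_single when_def)
    then show ?thesis
      using True by (simp add: mono_action_def lookup_add)
  next
    case False
    then have "mono_action js (m + Poly_Mapping.single k 1) q = B k (mono_action js m q)" for q
      using Cons by auto
    moreover have "i < N" "k < N"
      using Cons.prems by auto
    ultimately show ?thesis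
      using False by (simp add: mono_action_def lookup_add lookup_single Bsq_funpow_commute)
  qed
qed simp

lemma flip_invariant_mono_action:
  "set js \<subseteq> {..<N} \<Longrightarrow> flip_invariant N p \<Longrightarrow> flip_invariant N (mono_action js m p)"
proof (induction js arbitrary: p)
  case (Cons i js)
  have "flip_invariant N ((B i ^^ n) q)" if "flip_invariant N q" for n q
    using that by (induction n) (simp_all add: flip_invariant_Bsq)
  then show ?case
    using Cons by (simp add: mono_action_def)
qed (simp add: mono_action_def)

lemma sigmaB_eq_sum:
  assumes "finite S" "Poly_Mapping.keys f \<subseteq> S"
  shows "\<sigma> f = (\<Sum>m\<in>S. cst (Poly_Mapping.lookup f m) * mono_op \<beta> \<gamma> N m 1)"
  unfolding sigmaB_def
  by (rule sum.mono_neutral_left[OF assms]) (auto simp: in_keys_iff)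

lemma sigmaB_add: "\<sigma> (p + q) = \<sigma> p + \<sigma> q"
proof -
  have "Poly_Mapping.keys (p + q) \<subseteq> Poly_Mapping.keys p \<union> Poly_Mapping.keys q"
    by (rule keys_add)
  then show ?thesis
    by (simp add: sigmaB_eq_sum[of "Poly_Mapping.keys p \<union> Poly_Mapping.keys q"]
        lookup_add cst_add distrib_right sum.distrib)
qed

lemma sigmaB_cst_mult: "\<sigma> (cst c * p) = cst c * \<sigma> p"
proof -
  have "Poly_Mapping.keys (cst c * p) \<subseteq> Poly_Mapping.keys p"
    by (auto simp: in_keys_iff lookup_cst_mult)
  then show ?thesis
    by (simp add: sigmaB_eq_sum[of "Poly_Mapping.keys p"] lookup_cst_mult
        cst_mult_cst[symmetric] sum_distrib_left mult.assoc)
qed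

lemma sigmaB_0: "\<sigma> 0 = 0"
  by (simp add: sigmaB_def)

lemma sigmaB_diff: "\<sigma> (p - q) = \<sigma> p - \<sigma> q"
  using sigmaB_add[of "p - q" q] by simp

lemma sigmaB_sum: "\<sigma> (sum f S) = (\<Sum>k\<in>S. \<sigma> (f k))"
  by (induction S rule: infinite_finite_induct) (simp_all add: sigmaB_0 sigmaB_add)

lemma sigmaB_cst: "\<sigma> (cst c) = cst c"
proof -
  have "Poly_Mapping.keys (cst c) \<subseteq> {0}"
    by (simp add: cst_def)
  then show ?thesis
    by (simp add: sigmaB_eq_sum[of "{0}"] mono_op_eq_mono_action mono_action_0) (simp add: cst_def)
qed

lemma sigmaB_var_mult:
  assumes "k < N"
  shows "\<sigma> (var k * p) = B k (\<sigma> p)"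
proof -
  let ?e = "Poly_Mapping.single k (1::nat)"
  have inj: "inj_on (\<lambda>m. m + ?e) (Poly_Mapping.keys p)"
    by (rule inj_onI) simp
  have "Poly_Mapping.keys (var k * p) \<subseteq> (\<lambda>m. m + ?e) ` Poly_Mapping.keys p"
  proof
    fix m
    assume "m \<in> Poly_Mapping.keys (var k * p)"
    then have "0 < Poly_Mapping.lookup m k" "m - ?e \<in> Poly_Mapping.keys p"
      by (auto simp: in_keys_iff lookup_var_mult split: if_splits)
    moreover from this(1) have "m = (m - ?e) + ?e"
      by (intro poly_mapping_eqI) (auto simp: lookup_add lookup_minus lookup_single when_def)
    ultimately show "m \<in> (\<lambda>m. m + ?e) ` Poly_Mapping.keys p"
      by blast
  qed
  then have "\<sigma> (var k * p) = (\<Sum>m\<in>(\<lambda>m. m + ?e) ` Poly_Mapping.keys p.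
      cst (Poly_Mapping.lookup (var k * p) m) * mono_op \<beta> \<gamma> N m 1)"
    by (rule sigmaB_eq_sum[rotated]) simp
  also have "\<dots> = (\<Sum>m\<in>Poly_Mapping.keys p. cst (Poly_Mapping.lookup p m) * B k (mono_op \<beta> \<gamma> N m 1))"
  proof -
    have "m + ?e - ?e = m" for m
      by (rule poly_mapping_eqI) (simp add: lookup_add lookup_minus)
    then have "Poly_Mapping.lookup (var k * p) (m + ?e) = Poly_Mapping.lookup p m" for m
      by (simp add: lookup_var_mult lookup_add)
    moreover have "mono_action [0..<N] (m + ?e) 1 = B k (mono_action [0..<N] m 1)" for m
      using mono_action_add_single[of "[0..<N]" k m 1] assms by (simp add: atLeast0LessThan)
    ultimately show ?thesis
      unfolding sum.reindex[OF inj] o_def mono_op_eq_mono_action by simp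
  qed
  also have "\<dots> = B k (\<sigma> p)"
    unfolding sigmaB_def Bsq_sum Bsq_cst_mult ..
  finally show ?thesis .
qed

lemma sigmaB_swapv:
  assumes "a < N" "b < N" "in_vars N f"
  shows "\<sigma> (swapv a b f) = swapv a b (\<sigma> f)"
proof -
  have "vars_in {..<N} f"
    using assms by (simp add: in_vars_iff_vars_in)
  then show ?thesis
  proof (induction f rule: mpoly_induct)
    case (const c)
    then show ?case
      by (simp add: swapv.cst sigmaB_cst)
  next
    case (plus p q)
    then show ?case
      by (simp add: swapv.add sigmaB_add)
  next
    case (var l p)
    have "transpose a b l < N"
      using var assms by (auto simp: transpose_def)
    then show ?case
      using var by (simp add: swapv.var_mult swapv_var sigmaB_var_mult swapv_Bsq[OF assms(1,2)])
  qed
qed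

lemma flip_invariant_sigmaB: "flip_invariant N (\<sigma> f)"
  unfolding sigmaB_def mono_op_eq_mono_action
  by (intro flip_invariant_sum flip_invariant_cst_mult flip_invariant_mono_action flip_invariant_1) auto

lemma sigmaB_commA:
  assumes "j < N" "in_vars N p"
  shows "\<sigma> (commA j l p) = commA j l (\<sigma> p)"
proof -
  have "\<sigma> (\<Sum>k\<in>others j. swapv j k p) = (\<Sum>k\<in>others j. swapv j k (\<sigma> p))"
    unfolding sigmaB_sum using assms by (intro sum.cong) (auto simp: sigmaB_swapv)
  then show ?thesis
    unfolding commA_def using assms
    by (simp add: sigmaB_add sigmaB_cst_mult sigmaB_diff[of 0, simplified] sigmaB_swapv sigmaB_0)
qed

lemma hB_add: "hB j (p + q) = hB j p + hB j q"
  by (simp add: hB_def cre_add DB_add swapv.add reflv.add sum.distrib algebra_simps)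

lemma hB_cst: "hB j (cst c) = cb * (\<Sum>k<j. cst c)"
proof -
  have half: "cst (1/2) * cb * (X + X) = cb * X" for X
    by (rule poly_mapping_eqI) (simp add: lookup_linear_simps cst_mult_cst[symmetric] mult.assoc)
  show ?thesis
    unfolding hB_def DB_cst cre_0 swapv.cst reflv.cst sum.distrib
    by (simp only: mult_zero_right add_0_left half)
qed

lemma sigmaB_DhatA:
  assumes "j < N" "in_vars N f"
  shows "\<sigma> (DhatA \<beta> N j f) = hB j (\<sigma> f)"
proof -
  have "vars_in {..<N} f"
    using assms by (simp add: in_vars_iff_vars_in)
  then show ?thesis
  proof (induction f rule: mpoly_induct)
    case (const c)
    then show ?case
      unfolding DhatA_cst sigmaB_cst_mult sigmaB_sum sigmaB_cst hB_cst ..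
  next
    case (plus p q)
    then show ?case
      by (simp add: DhatA_add sigmaB_add hB_add)
  next
    case (var l p)
    have l: "l < N" and p: "in_vars N p"
      using var by (simp_all add: in_vars_iff_vars_in)
    have "\<sigma> ((var (transpose j k l) - var l) * swapv j k p)
        = B (transpose j k l) (swapv j k (\<sigma> p)) - B l (swapv j k (\<sigma> p))" if "k < j" for k
    proof -
      have "transpose j k l < N" "k < N"
        using assms l that by (auto simp: transpose_def)
      then show ?thesis
        unfolding left_diff_distrib sigmaB_diff
        by (simp add: sigmaB_var_mult l sigmaB_swapv[OF assms(1) _ p])
    qed
    then have "\<sigma> (DhatA \<beta> N j (var l * p)) = B l (hB j (\<sigma> p)) + B j (commA j l (\<sigma> p))
        + cb * (\<Sum>k<j. B (transpose j k l) (swapv j k (\<sigma> p)) - B l (swapv j k (\<sigma> p)))"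
      unfolding DhatA_var_mult sigmaB_add sigmaB_cst_mult sigmaB_sum sigmaB_var_mult[OF l]
        sigmaB_var_mult[OF assms(1)] var.IH sigmaB_commA[OF assms(1) p]
      by simp
    also have "\<dots> = hB j (\<sigma> (var l * p))"
      unfolding sigmaB_var_mult[OF l] hB_Bsq[OF assms(1) l flip_invariant_sigmaB] ..
    finally show ?case .
  qed
qed

lemma rhoB_H0_intertwines:
  assumes "(Q, R) \<in> rhoB_H0 \<beta> \<gamma> N"
  shows "in_vars N f \<Longrightarrow> in_vars N (Q f) \<and> \<sigma> (Q f) = R (\<sigma> f)"
  using assms
proof (induction arbitrary: f rule: rhoB_H0.induct)
  case (gen_D j)
  then show ?case
    by (simp add: sigmaB_DhatA half_htB_eq_hB in_vars_iff_vars_in vars_in_DhatA)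
next
  case (gen_s i j)
  then show ?case
    by (simp add: sigmaB_swapv in_vars_iff_vars_in vars_in_swapv)
next
  case (add Q1 R1 Q2 R2)
  then show ?case
    by (simp add: sigmaB_add in_vars_iff_vars_in vars_in_add)
next
  case (scal Q R c)
  then show ?case
    by (simp add: sigmaB_cst_mult in_vars_iff_vars_in vars_in_cst_mult)
qed simp_all

end

theorem theorem2p9:
  fixes N \<beta> :: nat and \<gamma> :: complex and Q R :: op and f :: mpoly
  assumes "N \<ge> 1"
    and "(Q, R) \<in> rhoB_H0 \<beta> \<gamma> N"
    and "in_vars N f"
  shows "sigmaB \<beta> \<gamma> N (Q f) = R (sigmaB \<beta> \<gamma> N f)"
  using dunkl.rhoB_H0_intertwines[OF assms(2,3)] by blast

end
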